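(* Fix a company $i\in\mathcal C$ and suppose that every vehicle of company $i$ can reach at least one station, i.e. $\bigcup_{j\in\mathcal M}\mathcal F^i_j=\mathcal V_i$. Define $\overline{\mathcal K}_i\subseteq\mathcal P_{\mathcal M}$ as the set of all $x^i\in\mathcal P_{\mathcal M}$ such that for every proper subset $S\subsetneq\mathcal M$, $$N_i\sum_{j\in S}x^i_j\;\le\;\max\Big\{0,\ \Big|\bigcup_{j\in S}\mathcal F^i_j\Big|-|S|\Big\}.$$ If $\overline{\mathcal K}_i\neq\emptyset$, then every $x^i\in\overline{\mathcal K}_i$ is feasible, and $\overline{\mathcal K}_i$ is compact and convex.
   Context: Setting: $\mathcal M$ is a finite set of charging stations with $m=|\mathcal M|\ge 2$. Company $i$ owns a finite set $\mathcal V_i$ of vehicles with $N_i=|\mathcal V_i|\ge 1$. For each station $j\in\mathcal M$, $\mathcal F^i_j\subseteq\mathcal V_i$ is the set of vehicles of company $i$ that can reach station $j$. $\mathcal P_{\mathcal M}=\{x\in\mathbb R_{\ge 0}^{\mathcal M}:\sum_{j\in\mathcal M}x_j=1\}$. Rounding: given $x^i\in\mathcal P_{\mathcal M}$, a rounding of $x^i$ is an integer vector $n^i\in\mathbb Z_{\ge0}^{\mathcal M}$ with $n^i_j\in\{\lfloor N_ix^i_j\rfloor,\lceil N_ix^i_j\rceil\}$ for every $j$ and $\sum_{j\in\mathcal M}n^i_j=N_i$. A valid assignment for $n^i$ is a map $\phi:\mathcal V_i\to\mathcal M$ with $v\in\mathcal F^i_{\phi(v)}$ for all $v\in\mathcal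 V_i$ and $|\phi^{-1}(j)|=n^i_j$ for all $j\in\mathcal M$. The vector $x^i\in\mathcal P_{\mathcal M}$ is called feasible if every rounding of $x^i$ admits a valid assignment. *)

theory Defs
  imports "HOL-Analysis.Analysis"
begin

text \<open>Stations are the elements of a finite type 'm (so the station set M is UNIV);
  a distribution over stations is a vector x :: real^'m.\<close>

definition prob_simplex :: "(real ^ 'm::finite) set" where
  "prob_simplex = {x. (\<forall>j. 0 \<le> x $ j) \<and> (\<Sum>j\<in>UNIV. x $ j) = 1}"

definition is_rounding :: "nat \<Rightarrow> real ^ 'm::finite \<Rightarrow> ('m \<Rightarrow> nat) \<Rightarrow> bool" where
  "is_rounding N x n \<longleftrightarrow>
     (\<forall>j. int (n j) = \<lfloor>real N * x $ j\<rfloor> \<or> int (n j) = \<lceil>real N * x $ j\<rceil>) \<and>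
     (\<Sum>j\<in>UNIV. n j) = N"

definition valid_assignment ::
  "'v set \<Rightarrow> ('m::finite \<Rightarrow> 'v set) \<Rightarrow> ('m \<Rightarrow> nat) \<Rightarrow> ('v \<Rightarrow> 'm) \<Rightarrow> bool" where
  "valid_assignment V F n phi \<longleftrightarrow>
     (\<forall>v\<in>V. v \<in> F (phi v)) \<and> (\<forall>j. card {v\<in>V. phi v = j} = n j)"

definition feasible :: "'v set \<Rightarrow> ('m::finite \<Rightarrow> 'v set) \<Rightarrow> real ^ 'm \<Rightarrow> bool" where
  "feasible V F x \<longleftrightarrow> x \<in> prob_simplex \<and>
     (\<forall>n. is_rounding (card V) x n \<longrightarrow> (\<exists>phi. valid_assignment V F n phi))"

definition Kbar :: "'v set \<Rightarrow> ('m::finite \<Rightarrow> 'v set) \<Rightarrow> (real ^ 'm) set" where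
  "Kbar V F = {x \<in> prob_simplex. \<forall>S. S \<subset> (UNIV :: 'm set) \<longrightarrow>
       real (card V) * (\<Sum>j\<in>S. x $ j)
         \<le> max 0 (real (card (\<Union>j\<in>S. F j)) - real (card S))}"

end

theory Submission
  imports Defs
begin

text \<open>
  Splitting station j
  into n j slots, a valid assignment is a perfect matching of slots onto vehicles, which by
  Hall's marriage theorem exists as soon as every set S of stations has at least
  sum n S reachable vehicles. For S = M this is the covering hypothesis. For a proper
  subset S, either the bound defining Kbar is the number of vehicles reaching S minus |S|,
  and since each rounded value exceeds N x_j by less than 1 the required inequality
  follows; or the bound is 0, which forces x_j = 0 and hence n j = 0 on S. Compactness and
  convexity hold because Kbar is the simplex cut by finitely many linear half-spaces.
\<close>

definition hall_condition :: "'i set \<Rightarrow> ('i \<Rightarrow> 'a set) \<Rightarrow> bool" where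
  "hall_condition I A \<longleftrightarrow> (\<forall>J\<subseteq>I. card J \<le> card (\<Union>(A ` J)))"

lemma hall_condition_mono: "hall_condition I A \<Longrightarrow> J \<subseteq> I \<Longrightarrow> hall_condition J A"
  unfolding hall_condition_def by blast

lemma hall_condition_remove_tight:
  assumes "finite I" "\<forall>i\<in>I. finite (A i)" "hall_condition I A"
    and "J \<subseteq> I" "card (\<Union>(A ` J)) \<le> card J"
  shows "hall_condition (I - J) (\<lambda>i. A i - \<Union>(A ` J))"
  unfolding hall_condition_def
proof (intro allI impI)
  fix K assume K: "K \<subseteq> I - J"
  have KJ: "K \<union> J \<subseteq> I" using K assms(4) by blast
  hence fin: "finite K" "finite J" using assms(1) by (auto intro: finite_subset)
  have finU: "finite (\<Union>(A ` (K \<union> J)))"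
    using fin KJ assms(2) by (intro finite_UN_I) auto
  have sub: "\<Union>(A ` J) \<subseteq> \<Union>(A ` (K \<union> J))" by blast
  have "card K + card J = card (K \<union> J)"
    using fin K by (subst card_Un_disjoint) auto
  also have "\<dots> \<le> card (\<Union>(A ` (K \<union> J)))"
    using assms(3) KJ unfolding hall_condition_def by blast
  also have "\<dots> = card (\<Union>(A ` (K \<union> J)) - \<Union>(A ` J)) + card (\<Union>(A ` J))"
    using card_Diff_subset[OF finite_subset[OF sub finU] sub] card_mono[OF finU sub] by linarith
  also have "\<Union>(A ` (K \<union> J)) - \<Union>(A ` J) = (\<Union>i\<in>K. A i - \<Union>(A ` J))"
    by blast
  finally show "card K \<le> card (\<Union>i\<in>K. A i - \<Union>(A ` J))"
    using assms(5) by linarith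
qed

lemma hall_condition_remove_point:
  assumes "finite I" "\<forall>i\<in>I. finite (A i)"
    and strict: "\<forall>K. K \<noteq> {} \<and> K \<subset> I \<longrightarrow> card K < card (\<Union>(A ` K))"
    and "i \<in> I"
  shows "hall_condition (I - {i}) (\<lambda>k. A k - {x})"
  unfolding hall_condition_def
proof (intro allI impI)
  fix K assume K: "K \<subseteq> I - {i}"
  show "card K \<le> card (\<Union>k\<in>K. A k - {x})"
  proof (cases "K = {}")
    case False
    have "K \<subset> I" using K assms(4) by blast
    hence "card K < card (\<Union>(A ` K))" using strict False by blast
    moreover have "finite (\<Union>(A ` K))"
      using K assms(1,2) by (intro finite_UN_I) (auto intro: finite_subset)
    ultimately have "card K \<le> card (\<Union>(A ` K) - {x})"
      by (cases "x \<in> \<Union>(A ` K)") (auto simp: card_Diff_singleton)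
    also have "\<Union>(A ` K) - {x} = (\<Union>k\<in>K. A k - {x})" by blast
    finally show ?thesis .
  qed simp
qed

lemma sdr_combine:
  assumes "J \<subseteq> I"
    and "inj_on f J" "\<forall>i\<in>J. f i \<in> A i \<inter> X"
    and "inj_on g (I - J)" "\<forall>i\<in>I - J. g i \<in> A i - X"
  shows "\<exists>h. inj_on h I \<and> (\<forall>i\<in>I. h i \<in> A i)"
proof (intro exI conjI)
  let ?h = "\<lambda>i. if i \<in> J then f i else g i"
  have "inj_on ?h J" by (rule inj_on_cong[THEN iffD2, OF _ assms(2)]) simp
  moreover have "inj_on ?h (I - J)" by (rule inj_on_cong[THEN iffD2, OF _ assms(4)]) simp
  moreover have "?h ` J \<subseteq> X" and "?h ` (I - J) \<inter> X = {}" using assms(3,5) by auto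
  ultimately have "inj_on ?h (J \<union> (I - J))" unfolding inj_on_Un by blast
  thus "inj_on ?h I" using assms(1) by (simp add: Un_absorb1)
  show "\<forall>i\<in>I. ?h i \<in> A i" using assms(3,5) by auto
qed

theorem hall_marriage:
  assumes "finite I" "\<forall>i\<in>I. finite (A i)" "hall_condition I A"
  shows "\<exists>f. inj_on f I \<and> (\<forall>i\<in>I. f i \<in> A i)"
  using assms
proof (induction "card I" arbitrary: I A rule: less_induct)
  case less
  note fin = less.prems(1) and finA = less.prems(2) and hall = less.prems(3)
  have IH: "\<exists>f. inj_on f I' \<and> (\<forall>i\<in>I'. f i \<in> A' i)"
    if "I' \<subset> I" "\<forall>i\<in>I'. finite (A' i)" "hall_condition I' A'"
    for I' and A' :: "'a \<Rightarrow> 'b set"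
    using less.hyps[OF psubset_card_mono[OF fin that(1)]
        finite_subset[OF psubset_imp_subset[OF that(1)] fin] that(2,3)] .
  show ?case
  proof (cases "\<exists>J. J \<noteq> {} \<and> J \<subset> I \<and> card (\<Union>(A ` J)) \<le> card J")
    case True
    then obtain J where J: "J \<noteq> {}" "J \<subset> I" "card (\<Union>(A ` J)) \<le> card J" by blast
    hence "J \<subseteq> I" "I - J \<subset> I" by auto
    obtain f where "inj_on f J" "\<forall>i\<in>J. f i \<in> A i"
      using IH[of J A] J(2) finA hall_condition_mono[OF hall \<open>J \<subseteq> I\<close>] by blast
    moreover obtain g where "inj_on g (I - J)" "\<forall>i\<in>I - J. g i \<in> A i - \<Union>(A ` J)"
      using IH[of "I - J" "\<lambda>i. A i - \<Union>(A ` J)"] \<open>I - J \<subset> I\<close> finA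
        hall_condition_remove_tight[OF fin finA hall \<open>J \<subseteq> I\<close> J(3)] by blast
    ultimately show ?thesis
      using \<open>J \<subseteq> I\<close> sdr_combine[of J I f A "\<Union>(A ` J)" g] by blast
  next
    case no_tight: False
    show ?thesis
    proof (cases "I = {}")
      case False
      then obtain i where i: "i \<in> I" by blast
      have "card {i} \<le> card (\<Union>(A ` {i}))"
        using hall i unfolding hall_condition_def by blast
      then obtain x where x: "x \<in> A i" by fastforce
      have strict: "\<forall>K. K \<noteq> {} \<and> K \<subset> I \<longrightarrow> card K < card (\<Union>(A ` K))"
        using no_tight by (auto simp: not_le)
      obtain g where "inj_on g (I - {i})" "\<forall>k\<in>I - {i}. g k \<in> A k - {x}"
        using IH[of "I - {i}" "\<lambda>k. A k - {x}"] i finA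
          hall_condition_remove_point[OF fin finA strict i] by blast
      thus ?thesis using i x sdr_combine[of "{i}" I "\<lambda>_. x" A "{x}" g] by auto
    qed simp
  qed
qed

lemma hall_condition_slots:
  fixes F :: "'m::finite \<Rightarrow> 'v set" and n :: "'m \<Rightarrow> nat"
  assumes "\<And>S. sum n S \<le> card (\<Union>j\<in>S. F j)"
  shows "hall_condition (SIGMA j:UNIV. {..<n j}) (F \<circ> fst)"
  unfolding hall_condition_def
proof (intro allI impI)
  fix T assume "T \<subseteq> (SIGMA j:UNIV. {..<n j})"
  hence "T \<subseteq> (SIGMA j:fst ` T. {..<n j})" by force
  hence "card T \<le> card (SIGMA j:fst ` T. {..<n j})" by (intro card_mono) auto
  also have "\<dots> = sum n (fst ` T)" by simp
  also have "\<dots> \<le> card (\<Union>((F \<circ> fst) ` T))" using assms[of "fst ` T"] by (simp add: image_comp)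
  finally show "card T \<le> card (\<Union>((F \<circ> fst) ` T))" .
qed

lemma valid_assignment_if_hall:
  fixes V :: "'v set" and F :: "'m::finite \<Rightarrow> 'v set" and n :: "'m \<Rightarrow> nat"
  assumes "finite V" and "\<And>j. F j \<subseteq> V" and "(\<Sum>j\<in>UNIV. n j) = card V"
    and "\<And>S. sum n S \<le> card (\<Union>j\<in>S. F j)"
  shows "\<exists>phi. valid_assignment V F n phi"
proof -
  define slots where "slots = (SIGMA j:UNIV. {..<n j})"
  have card_slots: "card {p\<in>slots. fst p = j} = n j" for j
  proof -
    have "{p\<in>slots. fst p = j} = {j} \<times> {..<n j}" unfolding slots_def by auto
    thus ?thesis by simp
  qed
  have hall: "hall_condition slots (F \<circ> fst)"
    unfolding slots_def using assms(4) by (rule hall_condition_slots)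
  have "finite slots" unfolding slots_def by simp
  moreover have "\<forall>p\<in>slots. finite ((F \<circ> fst) p)" using finite_subset[OF assms(2,1)] by simp
  ultimately obtain f where f: "inj_on f slots" "\<forall>p\<in>slots. f p \<in> F (fst p)"
    using hall_marriage[OF _ _ hall] by auto
  have "f ` slots \<subseteq> V" using f(2) assms(2) by blast
  moreover have "card (f ` slots) = card V"
    using f(1) assms(3) by (simp add: card_image slots_def)
  ultimately have "bij_betw f slots V"
    using f(1) assms(1) by (simp add: bij_betw_def card_subset_eq)
  hence g: "bij_betw (inv_into slots f) V slots" by (rule bij_betw_inv_into)
  show ?thesis
  proof (intro exI conjI)
    let ?phi = "fst \<circ> inv_into slots f"
    show "valid_assignment V F n ?phi"
      unfolding valid_assignment_def
    proof (intro conjI ballI allI)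
      fix v assume "v \<in> V"
      hence "inv_into slots f v \<in> slots" using g bij_betwE by blast
      moreover have "f (inv_into slots f v) = v"
        using \<open>v \<in> V\<close> \<open>bij_betw f slots V\<close> by (simp add: bij_betw_inv_into_right)
      ultimately show "v \<in> F (?phi v)" using f(2) by force
    next
      fix j
      have "bij_betw (inv_into slots f) {v\<in>V. ?phi v = j} {p\<in>slots. fst p = j}"
        using g by (rule bij_betw_Collect) simp
      thus "card {v\<in>V. ?phi v = j} = n j" using card_slots by (simp add: bij_betw_same_card)
    qed
  qed
qed

lemma rounding_le_add_one:
  assumes "is_rounding N x n"
  shows "real (n j) \<le> real N * x $ j + 1"
proof -
  have "int (n j) \<le> \<lceil>real N * x $ j\<rceil>"
    using assms floor_le_ceiling unfolding is_rounding_def by (metis order.refl)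
  thus ?thesis using of_int_ceiling_le_add_one[of "real N * x $ j"] by linarith
qed

lemma rounding_eq_0:
  assumes "is_rounding N x n" and "real N * x $ j = 0"
  shows "n j = 0"
  using assms unfolding is_rounding_def by (metis ceiling_zero floor_zero of_nat_eq_0_iff)

lemma sum_rounding_le_card_reach:
  assumes "x \<in> Kbar V F" and "is_rounding (card V) x n" and "S \<subset> UNIV"
  shows "sum n S \<le> card (\<Union>j\<in>S. F j)"
proof -
  define U where "U = card (\<Union>j\<in>S. F j)"
  have bound: "(\<Sum>j\<in>S. real (card V) * x $ j) \<le> max 0 (real U - real (card S))"
    using assms(1,3) unfolding Kbar_def U_def by (simp add: sum_distrib_left)
  show ?thesis
  proof (cases "card S \<le> U")
    case True
    have "real (sum n S) \<le> (\<Sum>j\<in>S. real (card V) * x $ j + 1)"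
      unfolding of_nat_sum by (intro sum_mono rounding_le_add_one[OF assms(2)])
    also have "\<dots> \<le> real U" using bound True by (simp add: sum.distrib)
    finally show ?thesis unfolding U_def by linarith
  next
    case False
    have nonneg: "0 \<le> real (card V) * x $ j" for j
      using assms(1) unfolding Kbar_def prob_simplex_def by simp
    have "(\<Sum>j\<in>S. real (card V) * x $ j) = 0"
      using bound False sum_nonneg[of S "\<lambda>j. real (card V) * x $ j", OF nonneg] by linarith
    hence "real (card V) * x $ j = 0" if "j \<in> S" for j
      using that nonneg sum_nonneg_eq_0_iff[of S "\<lambda>j. real (card V) * x $ j"] by auto
    hence "\<forall>j\<in>S. n j = 0" using rounding_eq_0[OF assms(2)] by blast
    thus ?thesis by simp
  qed
qed

lemma feasible_if_mem_Kbar: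
  assumes "finite V" and "\<And>j. F j \<subseteq> V" and "(\<Union>j. F j) = V" and "x \<in> Kbar V F"
  shows "feasible V F x"
  unfolding feasible_def
proof (intro conjI allI impI)
  show "x \<in> prob_simplex" using assms(4) unfolding Kbar_def by blast
  fix n assume rounding: "is_rounding (card V) x n"
  hence total: "(\<Sum>j\<in>UNIV. n j) = card V" unfolding is_rounding_def by blast
  have "sum n S \<le> card (\<Union>j\<in>S. F j)" for S
  proof (cases "S = UNIV")
    case True thus ?thesis using total assms(3) by simp
  next
    case False thus ?thesis using sum_rounding_le_card_reach assms(4) rounding by blast
  qed
  thus "\<exists>phi. valid_assignment V F n phi"
    using valid_assignment_if_hall assms(1,2) total by blast
qed

lemma linear_component_sum: "linear (\<lambda>x :: real ^ 'n. \<Sum>j\<in>S. x $ j)"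
  by (intro linear_compose_sum ballI bounded_linear.linear bounded_linear_vec_nth)

lemma convex_component_sum_le: "convex {x :: real ^ 'n. c * (\<Sum>j\<in>S. x $ j) \<le> b}"
  using convex_linear_vimage[OF linear_component_sum, of "{t. c * t \<le> b}" S]
  by (simp add: vimage_def convex_halfspace_le[of c b, simplified])

lemma closed_component_sum_le: "closed {x :: real ^ 'n. c * (\<Sum>j\<in>S. x $ j) \<le> b}"
  by (intro closed_Collect_le continuous_intros)

lemma prob_simplex_eq:
  "prob_simplex = (\<Inter>j. (\<lambda>x. x $ j) -` {0..}) \<inter> (\<lambda>x. \<Sum>j\<in>UNIV. x $ j) -` {1}"
  unfolding prob_simplex_def by auto

lemma convex_prob_simplex: "convex prob_simplex"
  unfolding prob_simplex_eq
  by (intro convex_Int convex_INT convex_linear_vimage linear_component_sum ballI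
      bounded_linear.linear bounded_linear_vec_nth) auto

lemma closed_prob_simplex: "closed prob_simplex"
  unfolding prob_simplex_def
  by (intro closed_Collect_conj closed_Collect_all closed_Collect_le closed_Collect_eq
      continuous_intros)

lemma bounded_prob_simplex: "bounded prob_simplex"
  unfolding bounded_iff
proof (intro exI ballI)
  fix x :: "real ^ 'n" assume x: "x \<in> prob_simplex"
  have "norm x \<le> (\<Sum>j\<in>UNIV. \<bar>x $ j\<bar>)" by (rule norm_le_l1_cart)
  also have "\<dots> = 1" using x unfolding prob_simplex_def by simp
  finally show "norm x \<le> 1" .
qed

lemma compact_prob_simplex: "compact prob_simplex"
  by (simp add: compact_eq_bounded_closed bounded_prob_simplex closed_prob_simplex)

lemma Kbar_eq_Inter:
  "Kbar V F = prob_simplex \<inter> (\<Inter>S\<in>{S. S \<subset> UNIV}.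
     {x. real (card V) * (\<Sum>j\<in>S. x $ j) \<le> max 0 (real (card (\<Union>j\<in>S. F j)) - real (card S))})"
  unfolding Kbar_def by auto

lemma compact_Kbar: "compact (Kbar V F)"
  unfolding Kbar_eq_Inter
  by (intro compact_Int_closed compact_prob_simplex closed_INT ballI closed_component_sum_le)

lemma convex_Kbar: "convex (Kbar V F)"
  unfolding Kbar_eq_Inter
  by (intro convex_Int convex_prob_simplex convex_INT ballI convex_component_sum_le)

theorem proposition1:
  fixes V :: "'v set" and F :: "'m::finite \<Rightarrow> 'v set"
  assumes "CARD('m) \<ge> 2"
    and "finite V" and "V \<noteq> {}"
    and "\<And>j. F j \<subseteq> V"
    and "(\<Union>j. F j) = V"
    and "Kbar V F \<noteq> {}"
  shows "(\<forall>x\<in>Kbar V F. feasible V F x) \<and> compact (Kbar V F) \<and> convex (Kbar V F)"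
proof (intro conjI ballI)
  fix x assume "x \<in> Kbar V F"
  thus "feasible V F x" using feasible_if_mem_Kbar assms(2,4,5) by blast
qed (rule compact_Kbar, rule convex_Kbar)

end
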